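(* Let $\{x^k\}$ be generated by the ABP algorithm described in the context, and assume (A1)–(A7): (A1) $\mathcal F$ is continuously differentiable; (A2) $C$, $Q$ nonempty closed convex, $z_i^*>-\infty$ for each $i$; (A3) each $f_i$ convex; (A4) $\Omega\ne\emptyset$; (A5) $\lambda_k>0$, $\sum\lambda_k=\infty$, $\sum\lambda_k^2<\infty$; (A6) $0<\underline\alpha\le\alpha_k\le\bar\alpha$, $0<\underline\beta\le\beta_k\le\bar\beta$, $0<\underline\gamma\le\gamma_k\le\bar\gamma$ for all $k$; (A7) $\varphi_{\mathrm{lb}}=\varphi^*$. Then there is $\bar M<\infty$ with $\|d^k\|\le\bar M$ for all $k$, and $\mu\le\eta_k\le\bar\eta:=\max(\mu,\bar M)$ for all $k$.
   Context: Let $n,m\ge1$, $\mathcal F=(f_1,\dots,f_m)\colon\mathbb R^n\to\mathbb R^m$, $C\subset\mathbb R^n$, $Q\subset\mathbb R^m$, $Q^+:=Q-\mathbb R^m_+=\{y-u:y\in Q,u\in\mathbb R^m_+\}$; $P_S$ is Euclidean projection onto a nonempty closed convex set $S$. Let $z_i^*:=\inf_{x\in C}f_i(x)$, fix $r$ with $r_i>0$, $\sum r_i=1$. Define $\varphi(x):=\max_ir_i(f_i(x)-z_i^* )$, $H(x):=\tfrac12\mathrm{dist}^2(x,C)$, $G(x):=\tfrac12\mathrm{dist}^2(\mathcal F(x),Q^+)$, $\mathcal S:=\{x:H(x)=0,G(x)=0\}$, $\varphi^*:=\inf_{\mathcal S}\varphi$, $\Omega:=\{x\in\mathcal S:\varphi(x)=\varphi^*\}$,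 $\varphi_{\mathrm{lb}}:=\inf_C\varphi$. ABP algorithm: given $x^0$, $\mu>0$, positive sequences $\{\alpha_k\},\{\beta_k\},\{\gamma_k\},\{\lambda_k\}$: $p^k:=P_{Q^+}(\mathcal F(x^k))$, $\rho^k:=\mathcal F(x^k)-p^k$, $z^k:=x^k-P_C(x^k)$, $v^k:=J_{\mathcal F}(x^k)^T\rho^k$, $w^k:=r_{i^*}\nabla f_{i^*}(x^k)$ with arbitrary $i^*\in\arg\max_ir_i(f_i(x^k)-z_i^* )$, $\Delta_k:=\varphi(x^k)-\varphi_{\mathrm{lb}}$, $d^k:=\alpha_k\mathbf 1_{\{\Delta_k\ge0\}}w^k+\beta_kz^k+\gamma_kv^k$, $\eta_k:=\max(\mu,\|d^k\|)$, $x^{k+1}:=x^k-(\lambda_k/\eta_k)d^k$. *)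

theory Defs
  imports "HOL-Analysis.Analysis"
begin

definition Qplus :: "(real^'m) set \<Rightarrow> (real^'m) set" where
  "Qplus Q = {y - u | y u. y \<in> Q \<and> (\<forall>i. 0 \<le> u $ i)}"

text \<open>Euclidean projection onto Q^+ (onto its closure, which coincides with Q^+
  whenever Q^+ is closed, as tacitly assumed in the paper).\<close>
definition projQp :: "(real^'m) set \<Rightarrow> real^'m \<Rightarrow> real^'m" where
  "projQp Q y = closest_point (closure (Qplus Q)) y"

definition zstar :: "(real^'n \<Rightarrow> real^'m) \<Rightarrow> (real^'n) set \<Rightarrow> 'm \<Rightarrow> real" where
  "zstar F C i = Inf ((\<lambda>x. F x $ i) ` C)"

definition phi :: "(real^'n \<Rightarrow> real^'m) \<Rightarrow> (real^'n) set \<Rightarrow> real^'m \<Rightarrow> real^'n \<Rightarrow> real" where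
  "phi F C r x = Max (range (\<lambda>i. r $ i * (F x $ i - zstar F C i)))"

definition Hfun :: "(real^'n) set \<Rightarrow> real^'n \<Rightarrow> real" where
  "Hfun C x = (1/2) * (infdist x C)\<^sup>2"

definition Gfun :: "(real^'n \<Rightarrow> real^'m) \<Rightarrow> (real^'m) set \<Rightarrow> real^'n \<Rightarrow> real" where
  "Gfun F Q x = (1/2) * (infdist (F x) (Qplus Q))\<^sup>2"

definition feasS :: "(real^'n \<Rightarrow> real^'m) \<Rightarrow> (real^'n) set \<Rightarrow> (real^'m) set \<Rightarrow> (real^'n) set" where
  "feasS F C Q = {x. Hfun C x = 0 \<and> Gfun F Q x = 0}"

definition phistar where
  "phistar F C Q r = Inf (phi F C r ` feasS F C Q)"

definition Omega where
  "Omega F C Q r = {x \<in> feasS F C Q. phi F C r x = phistar F C Q r}"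

definition philb where
  "philb F C r = Inf (phi F C r ` C)"

text \<open>Direction d^k of the ABP algorithm at the point x, with step parameters
  a = alpha_k, b = beta_k, g = gamma_k and selected index i = i^*.
  grad j x is the gradient of f_j at x, so that J_F(x)^T rho = sum_j rho_j grad j x.\<close>
definition abp_d ::
  "(real^'n \<Rightarrow> real^'m) \<Rightarrow> ('m \<Rightarrow> real^'n \<Rightarrow> real^'n) \<Rightarrow> (real^'n) set \<Rightarrow> (real^'m) set
    \<Rightarrow> real^'m \<Rightarrow> real \<Rightarrow> real \<Rightarrow> real \<Rightarrow> 'm \<Rightarrow> real^'n \<Rightarrow> real^'n" where
  "abp_d F grad C Q r a b g i x =
    (let p = projQp Q (F x);
         rho = F x - p;
         z = x - closest_point C x;
         v = (\<Sum>j\<in>UNIV. (rho $ j) *\<^sub>R grad j x);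
         w = (r $ i) *\<^sub>R grad i x;
         \<Delta> = phi F C r x - philb F C r
     in (if \<Delta> \<ge> 0 then a else 0) *\<^sub>R w + b *\<^sub>R z + g *\<^sub>R v)"

end

theory Submission imports Defs begin

text \<open>Fix a solution s \<in> \<Omega>. Each of the three parts of d^k makes a nonnegative inner product
  with x^k - s: the w-part by the gradient inequality for the convex f_{i*}, because it is only
  switched on when \<phi>(x^k) \<ge> \<phi>_lb = \<phi>* = \<phi>(s); the z-part by the variational characterisation
  of P_C; the v-part by the gradient inequalities for all f_j, because \<rho>^k \<ge> 0 (Q^+ is
  invariant under subtracting R^m_+) and \<rho>^k \<bullet> (F(x^k) - F(s)) \<ge> 0. As the step has length
  at most \<lambda>_k, this gives ||x^{k+1} - s||^2 \<le> ||x^k - s||^2 + \<lambda>_k^2, so the iterates stay in a fixed ball, on which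
  ||d^k|| is dominated by a continuous function of x^k.\<close>

lemma convex_on_gradient_inequality:
  fixes f :: "'a::real_normed_vector \<Rightarrow> real"
  assumes cvx: "convex_on UNIV f" and deriv: "(f has_derivative f') (at x)"
  shows "f' (y - x) \<le> f y - f x"
proof -
  define G where "G t = f (x + t *\<^sub>R (y - x))" for t :: real
  have "convex_on UNIV G"
  proof (rule convex_onI)
    fix t s u :: real assume "0 < t" "t < 1"
    have "G ((1 - t) *\<^sub>R s + t *\<^sub>R u) = f ((1 - t) *\<^sub>R (x + s *\<^sub>R (y - x)) + t *\<^sub>R (x + u *\<^sub>R (y - x)))"
      unfolding G_def by (simp add: algebra_simps)
    also have "\<dots> \<le> (1 - t) * G s + t * G u"
      unfolding G_def using convex_onD[OF cvx, of t] \<open>0 < t\<close> \<open>t < 1\<close> by simp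
    finally show "G ((1 - t) *\<^sub>R s + t *\<^sub>R u) \<le> (1 - t) * G s + t * G u" .
  qed simp
  moreover have "(G has_field_derivative f' (y - x)) (at 0)"
  proof -
    have line: "((\<lambda>t. x + t *\<^sub>R (y - x)) has_derivative (\<lambda>t. t *\<^sub>R (y - x))) (at 0)"
      by (auto intro!: derivative_eq_intros)
    have "(G has_derivative (\<lambda>t. f' (t *\<^sub>R (y - x)))) (at 0)"
      unfolding G_def using has_derivative_compose[OF line, of f f'] deriv by simp
    moreover have "(\<lambda>t. f' (t *\<^sub>R (y - x))) = (*) (f' (y - x))"
      using has_derivative_linear[OF deriv] by (auto simp: linear_scale fun_eq_iff)
    ultimately show ?thesis unfolding has_field_derivative_def by simp
  qed
  ultimately have "G 1 - G 0 \<ge> f' (y - x) * (1 - 0)"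
    by (intro convex_on_imp_above_tangent[of UNIV]) auto
  then show ?thesis unfolding G_def by simp
qed

lemma closest_point_residual_inner_nonneg:
  assumes "convex S" "closed S" "s \<in> S"
  shows "0 \<le> (a - closest_point S a) \<bullet> (a - s)"
proof -
  let ?e = "a - closest_point S a"
  have "?e \<bullet> (s - closest_point S a) \<le> 0"
    using closest_point_dot[OF assms] .
  moreover have "?e \<bullet> (a - s) = ?e \<bullet> ?e - ?e \<bullet> (s - closest_point S a)"
    by (simp add: inner_diff_right)
  ultimately show ?thesis
    using inner_ge_zero[of ?e] by linarith
qed

lemma convex_Qplus:
  fixes Q :: "(real^'m) set"
  assumes "convex Q"
  shows "convex (Qplus Q)"
  unfolding convex_def Qplus_def
proof clarify
  fix y1 u1 y2 u2 :: "real^'m" and a b :: real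
  assume hyps: "y1 \<in> Q" "\<forall>i. 0 \<le> u1 $ i" "y2 \<in> Q" "\<forall>i. 0 \<le> u2 $ i" "0 \<le> a" "0 \<le> b" "a + b = 1"
  have "a *\<^sub>R (y1 - u1) + b *\<^sub>R (y2 - u2) = (a *\<^sub>R y1 + b *\<^sub>R y2) - (a *\<^sub>R u1 + b *\<^sub>R u2)"
    by (simp add: algebra_simps)
  moreover have "a *\<^sub>R y1 + b *\<^sub>R y2 \<in> Q"
    using \<open>convex Q\<close> hyps unfolding convex_def by blast
  moreover have "\<forall>i. 0 \<le> (a *\<^sub>R u1 + b *\<^sub>R u2) $ i"
    using hyps by simp
  ultimately show "\<exists>y u. a *\<^sub>R (y1 - u1) + b *\<^sub>R (y2 - u2) = y - u \<and> y \<in> Q \<and> (\<forall>i. 0 \<le> u $ i)"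
    by blast
qed

lemma Qplus_nonempty:
  assumes "Q \<noteq> {}"
  shows "Qplus Q \<noteq> {}"
proof -
  obtain q where "q \<in> Q"
    using assms by blast
  then have "q - 0 \<in> Qplus Q"
    unfolding Qplus_def by fastforce
  then show ?thesis by blast
qed

lemma closure_Qplus_diff_nonneg:
  assumes "y \<in> closure (Qplus Q)" "\<forall>i. 0 \<le> u $ i"
  shows "y - u \<in> closure (Qplus Q)"
proof -
  have "(+) (-u) ` Qplus Q \<subseteq> Qplus Q"
  proof
    fix z assume "z \<in> (+) (-u) ` Qplus Q"
    then obtain q v where "q \<in> Q" "\<forall>i. 0 \<le> v $ i" "z = -u + (q - v)"
      unfolding Qplus_def by auto
    then have "z = q - (v + u)" "\<forall>i. 0 \<le> (v + u) $ i"
      using assms(2) by (auto simp: algebra_simps)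
    with \<open>q \<in> Q\<close> show "z \<in> Qplus Q"
      unfolding Qplus_def by blast
  qed
  then have "closure ((+) (-u) ` Qplus Q) \<subseteq> closure (Qplus Q)"
    by (rule closure_mono)
  moreover have "y - u \<in> closure ((+) (-u) ` Qplus Q)"
    using assms(1) closure_translation[of "-u" "Qplus Q"] by simp
  ultimately show ?thesis by blast
qed

lemma continuous_on_projQp:
  assumes "convex Q" "Q \<noteq> {}"
  shows "continuous_on UNIV (projQp Q)"
  unfolding projQp_def
  using assms convex_Qplus Qplus_nonempty
  by (intro continuous_on_closest_point) (auto simp: convex_closure)

lemma projQp_residual_nonneg:
  assumes "convex Q" "Q \<noteq> {}"
  shows "0 \<le> (y - projQp Q y) $ j"
proof -
  let ?S = "closure (Qplus Q)"
  have S: "convex ?S" "closed ?S" "?S \<noteq> {}"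
    using assms convex_Qplus Qplus_nonempty by (auto simp: convex_closure)
  then have "projQp Q y \<in> ?S"
    unfolding projQp_def using closest_point_in_set by blast
  then have "projQp Q y - axis j 1 \<in> ?S"
    by (rule closure_Qplus_diff_nonneg) (simp add: axis_def)
  from closest_point_dot[OF S(1,2) this, of y]
  have "(y - projQp Q y) \<bullet> (- axis j 1) \<le> 0"
    unfolding projQp_def by simp
  then show ?thesis by (simp add: inner_axis)
qed

lemma component_le_phi: "r $ i * (F y $ i - zstar F C i) \<le> phi F C r y"
  unfolding phi_def by (rule Max_ge) auto

lemma Omega_memD:
  assumes "s \<in> Omega F C Q r" "closed C" "C \<noteq> {}" "Q \<noteq> {}"
  shows "s \<in> C" "F s \<in> closure (Qplus Q)" "phi F C r s = phistar F C Q r"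
proof -
  have "infdist s C = 0" "infdist (F s) (Qplus Q) = 0" "phi F C r s = phistar F C Q r"
    using assms(1) unfolding Omega_def feasS_def Hfun_def Gfun_def by auto
  then show "s \<in> C" "F s \<in> closure (Qplus Q)" "phi F C r s = phistar F C Q r"
    using in_closure_iff_infdist_zero[OF assms(3)] closure_closed[OF assms(2)]
      in_closure_iff_infdist_zero[OF Qplus_nonempty[OF assms(4)]] by auto
qed

lemma inner_weighted_gradients_nonneg:
  fixes F :: "real^'n \<Rightarrow> real^'m" and rho :: "real^'m"
  assumes "\<And>j. 0 \<le> rho $ j" "0 \<le> rho \<bullet> (F y - F s)"
    and "\<And>j. F y $ j - F s $ j \<le> grad j y \<bullet> (y - s)"
  shows "0 \<le> (\<Sum>j\<in>UNIV. (rho $ j) *\<^sub>R grad j y) \<bullet> (y - s)"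
proof -
  have "rho \<bullet> (F y - F s) = (\<Sum>j\<in>UNIV. rho $ j * (F y $ j - F s $ j))"
    by (simp add: inner_vec_def)
  also have "\<dots> \<le> (\<Sum>j\<in>UNIV. rho $ j * (grad j y \<bullet> (y - s)))"
    by (intro sum_mono mult_left_mono assms)
  also have "\<dots> = (\<Sum>j\<in>UNIV. (rho $ j) *\<^sub>R grad j y) \<bullet> (y - s)"
    by (simp add: inner_sum_left)
  finally show ?thesis using assms(2) by linarith
qed

lemma abp_d_inner_nonneg:
  fixes F :: "real^'n \<Rightarrow> real^'m"
  assumes "0 \<le> r $ i" "convex C" "closed C" "convex Q" "Q \<noteq> {}"
    and s: "s \<in> C" "F s \<in> closure (Qplus Q)" "phi F C r s \<le> philb F C r"
    and "0 \<le> a" "0 \<le> b" "0 \<le> g"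
    and istar: "r $ i * (F y $ i - zstar F C i) = phi F C r y"
    and grad_ineq: "\<And>j. grad j y \<bullet> (s - y) \<le> F s $ j - F y $ j"
  shows "0 \<le> abp_d F grad C Q r a b g i y \<bullet> (y - s)"
proof -
  have F_diff: "F y $ j - F s $ j \<le> grad j y \<bullet> (y - s)" for j
    using grad_ineq[of j] unfolding inner_diff_right by linarith
  define rho where "rho = F y - projQp Q (F y)"
  define z where "z = y - closest_point C y"
  define v where "v = (\<Sum>j\<in>UNIV. (rho $ j) *\<^sub>R grad j y)"
  define w where "w = (r $ i) *\<^sub>R grad i y"
  define c where "c = (if phi F C r y - philb F C r \<ge> 0 then a else 0)"
  have d: "abp_d F grad C Q r a b g i y = c *\<^sub>R w + b *\<^sub>R z + g *\<^sub>R v"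
    unfolding abp_d_def Let_def rho_def z_def v_def w_def c_def by simp
  have w_part: "0 \<le> c * (w \<bullet> (y - s))"
  proof (cases "phi F C r y - philb F C r \<ge> 0")
    case True
    have "0 \<le> r $ i * (F y $ i - F s $ i)"
      using True istar s(3) component_le_phi[of r i F s C] by (simp add: algebra_simps)
    also have "\<dots> \<le> r $ i * (grad i y \<bullet> (y - s))"
      using F_diff \<open>0 \<le> r $ i\<close> by (rule mult_left_mono)
    finally show ?thesis
      unfolding c_def w_def using True \<open>0 \<le> a\<close> by simp
  qed (simp add: c_def)
  have z_part: "0 \<le> z \<bullet> (y - s)"
    unfolding z_def using assms(2,3) s(1) by (rule closest_point_residual_inner_nonneg)
  have "0 \<le> rho \<bullet> (F y - F s)"
    unfolding rho_def projQp_def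
    using assms(4) convex_Qplus s(2)
    by (intro closest_point_residual_inner_nonneg) (auto simp: convex_closure)
  then have v_part: "0 \<le> v \<bullet> (y - s)"
    unfolding v_def
    using projQp_residual_nonneg[OF assms(4,5)] F_diff
    by (intro inner_weighted_gradients_nonneg) (auto simp: rho_def)
  show ?thesis
    unfolding d using w_part z_part v_part \<open>0 \<le> b\<close> \<open>0 \<le> g\<close>
    by (simp add: inner_add_left)
qed

lemma norm_abp_d_le:
  fixes F :: "real^'n \<Rightarrow> real^'m"
  assumes "0 \<le> r $ i" "r $ i \<le> 1" "0 \<le> a" "a \<le> ah" "0 \<le> b" "b \<le> bh" "0 \<le> g" "g \<le> gh"
  shows "norm (abp_d F grad C Q r a b g i y) \<le>
    ah * (\<Sum>j\<in>UNIV. norm (grad j y)) + bh * norm (y - closest_point C y)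
    + gh * (norm (F y - projQp Q (F y)) * (\<Sum>j\<in>UNIV. norm (grad j y)))"
proof -
  define rho where "rho = F y - projQp Q (F y)"
  define z where "z = y - closest_point C y"
  define v where "v = (\<Sum>j\<in>UNIV. (rho $ j) *\<^sub>R grad j y)"
  define w where "w = (r $ i) *\<^sub>R grad i y"
  define c where "c = (if phi F C r y - philb F C r \<ge> 0 then a else 0)"
  define SG where "SG = (\<Sum>j\<in>UNIV. norm (grad j y))"
  have d: "abp_d F grad C Q r a b g i y = c *\<^sub>R w + b *\<^sub>R z + g *\<^sub>R v"
    unfolding abp_d_def Let_def rho_def z_def v_def w_def c_def by simp
  have "norm w = r $ i * norm (grad i y)"
    unfolding w_def using assms(1) by simp
  also have "\<dots> \<le> norm (grad i y)"
    using assms(1,2) by (simp add: mult_left_le_one_le)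
  also have "\<dots> \<le> SG"
    unfolding SG_def by (rule member_le_sum) auto
  finally have w: "norm w \<le> SG" .
  have "norm v \<le> (\<Sum>j\<in>UNIV. norm rho * norm (grad j y))"
    unfolding v_def
    by (rule order_trans[OF norm_sum sum_mono]) (simp add: component_le_norm_cart mult_right_mono)
  then have v: "norm v \<le> norm rho * SG"
    unfolding SG_def by (simp add: sum_distrib_left)
  have "c * norm w \<le> ah * SG"
    using assms(3,4) w by (intro mult_mono) (auto simp: c_def)
  moreover have "b * norm z \<le> bh * norm z"
    using assms(6) by (simp add: mult_right_mono)
  moreover have "g * norm v \<le> gh * (norm rho * SG)"
    using assms(7,8) v by (intro mult_mono) auto
  moreover have "norm (c *\<^sub>R w + b *\<^sub>R z + g *\<^sub>R v) \<le> c * norm w + b * norm z + g * norm v"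
    using norm_triangle_ineq[of "c *\<^sub>R w + b *\<^sub>R z" "g *\<^sub>R v"] norm_triangle_ineq[of "c *\<^sub>R w" "b *\<^sub>R z"]
      assms(3,5,7) by (simp add: c_def)
  ultimately show ?thesis
    unfolding d rho_def z_def SG_def by linarith
qed

lemma norm_normalized_step_sq_le:
  fixes a d :: "'a::real_inner"
  assumes "0 < mu" "0 \<le> l" "0 \<le> d \<bullet> a"
  shows "norm (a - (l / max mu (norm d)) *\<^sub>R d)^2 \<le> norm a^2 + l^2"
proof -
  define t where "t = l / max mu (norm d)"
  have "0 \<le> t"
    unfolding t_def using assms by simp
  have "t * norm d = l * (norm d / max mu (norm d))"
    unfolding t_def by simp
  also have "\<dots> \<le> l * 1"
    using assms by (intro mult_left_mono) (auto simp: divide_le_eq_1)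
  finally have "(t * norm d)^2 \<le> l^2"
    using \<open>0 \<le> t\<close> by (simp add: power_mono)
  moreover have "norm (a - t *\<^sub>R d)^2 = norm a^2 - 2 * t * (d \<bullet> a) + (t * norm d)^2"
  proof -
    have "norm (a - t *\<^sub>R d)^2 = (a - t *\<^sub>R d) \<bullet> (a - t *\<^sub>R d)"
      by (simp add: power2_norm_eq_inner)
    also have "\<dots> = a \<bullet> a - 2 * t * (d \<bullet> a) + t^2 * (d \<bullet> d)"
      by (simp add: inner_diff_left inner_diff_right inner_commute algebra_simps power2_eq_square)
    finally show ?thesis
      by (simp add: power2_norm_eq_inner power_mult_distrib)
  qed
  moreover have "0 \<le> t * (d \<bullet> a)"
    using \<open>0 \<le> t\<close> assms(3) by simp
  ultimately show ?thesis
    unfolding t_def by linarith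
qed

lemma normalized_steps_in_cball:
  fixes x d :: "nat \<Rightarrow> 'a::real_inner"
  assumes "0 < mu" "\<And>k. 0 \<le> lam k" "summable (\<lambda>k. (lam k)\<^sup>2)"
    and step: "\<And>k. x (Suc k) = x k - (lam k / max mu (norm (d k))) *\<^sub>R d k"
    and descent: "\<And>k. 0 \<le> d k \<bullet> (x k - s)"
  shows "x k \<in> cball s (sqrt (norm (x 0 - s)^2 + (\<Sum>k. (lam k)^2)))"
proof -
  have "norm (x k - s)^2 \<le> norm (x 0 - s)^2 + (\<Sum>i<k. (lam i)^2)"
  proof (induction k)
    case (Suc k)
    have "norm (x (Suc k) - s)^2 = norm ((x k - s) - (lam k / max mu (norm (d k))) *\<^sub>R d k)^2"
      unfolding step[of k] by (simp add: algebra_simps)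
    also have "\<dots> \<le> norm (x k - s)^2 + (lam k)^2"
      by (rule norm_normalized_step_sq_le[OF assms(1,2) descent])
    finally show ?case using Suc.IH by simp
  qed simp
  also have "\<dots> \<le> norm (x 0 - s)^2 + (\<Sum>k. (lam k)^2)"
    using sum_le_suminf[OF assms(3)] by simp
  finally show ?thesis
    by (simp add: dist_norm norm_minus_commute real_le_rsqrt)
qed

lemma abp_d_bounded_on_compact:
  fixes F :: "real^'n \<Rightarrow> real^'m"
  assumes "compact K" "continuous_on UNIV F" "\<And>j. continuous_on UNIV (grad j)"
    and "convex C" "closed C" "C \<noteq> {}" "convex Q" "Q \<noteq> {}"
  shows "bounded {abp_d F grad C Q r a b g i y | a b g i y.
    y \<in> K \<and> r $ i \<in> {0..1} \<and> a \<in> {0..ah} \<and> b \<in> {0..bh} \<and> g \<in> {0..gh}}"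
proof -
  define h where "h y = ah * (\<Sum>j\<in>UNIV. norm (grad j y)) + bh * norm (y - closest_point C y)
    + gh * (norm (F y - projQp Q (F y)) * (\<Sum>j\<in>UNIV. norm (grad j y)))" for y
  have "continuous_on UNIV (\<lambda>y. projQp Q (F y))"
    using continuous_on_compose2[OF continuous_on_projQp[OF assms(7,8)] assms(2)] by simp
  moreover have "continuous_on UNIV (closest_point C)"
    by (rule continuous_on_closest_point[OF assms(4,5,6)])
  ultimately have "continuous_on UNIV h"
    unfolding h_def using assms(2,3) by (intro continuous_intros)
  then have "continuous_on K h"
    by (rule continuous_on_subset) simp
  then have "bounded (h ` K)"
    using assms(1) by (intro compact_imp_bounded compact_continuous_image)
  then obtain M where M: "\<forall>y\<in>K. norm (h y) \<le> M"
    unfolding bounded_iff by blast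
  have "norm (abp_d F grad C Q r a b g i y) \<le> M"
    if "y \<in> K" "r $ i \<in> {0..1}" "a \<in> {0..ah}" "b \<in> {0..bh}" "g \<in> {0..gh}" for a b g i y
  proof -
    have "norm (abp_d F grad C Q r a b g i y) \<le> h y"
      unfolding h_def using that by (intro norm_abp_d_le) auto
    also have "\<dots> \<le> M"
      using M \<open>y \<in> K\<close> by (simp add: abs_le_iff)
    finally show ?thesis .
  qed
  then show ?thesis
    unfolding bounded_iff by blast
qed

theorem lemma12:
  fixes F :: "real^'n \<Rightarrow> real^'m"
    and grad :: "'m \<Rightarrow> real^'n \<Rightarrow> real^'n"
    and C :: "(real^'n) set" and Q :: "(real^'m) set"
    and r :: "real^'m" and mu :: real
    and x :: "nat \<Rightarrow> real^'n" and istar :: "nat \<Rightarrow> 'm"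
    and alpha beta gamma lam :: "nat \<Rightarrow> real"
    and alo ahi blo bhi glo ghi :: real
  assumes r_pos: "\<forall>i. r $ i > 0" and r_sum: "(\<Sum>i\<in>UNIV. r $ i) = 1"
    and mu_pos: "mu > 0"
    and A1_deriv: "\<forall>i y. ((\<lambda>y. F y $ i) has_derivative (\<lambda>h. grad i y \<bullet> h)) (at y)"
    and A1_cont: "\<forall>i. continuous_on UNIV (grad i)"
    and A2_C: "C \<noteq> {}" "closed C" "convex C"
    and A2_Q: "Q \<noteq> {}" "closed Q" "convex Q"
    and A2_z: "\<forall>i. bdd_below ((\<lambda>y. F y $ i) ` C)"
    and A3: "\<forall>i. convex_on UNIV (\<lambda>y. F y $ i)"
    and A4: "Omega F C Q r \<noteq> {}"
    and A5: "\<forall>k. lam k > 0" "\<not> summable lam" "summable (\<lambda>k. (lam k)\<^sup>2)"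
    and A6: "0 < alo" "\<forall>k. alo \<le> alpha k \<and> alpha k \<le> ahi"
            "0 < blo" "\<forall>k. blo \<le> beta k \<and> beta k \<le> bhi"
            "0 < glo" "\<forall>k. glo \<le> gamma k \<and> gamma k \<le> ghi"
    and A7: "philb F C r = phistar F C Q r"
    and istar: "\<forall>k. r $ istar k * (F (x k) $ istar k - zstar F C (istar k)) = phi F C r (x k)"
    and iter: "\<forall>k. x (Suc k) = x k - (lam k / max mu (norm (abp_d F grad C Q r (alpha k) (beta k) (gamma k) (istar k) (x k))))
                   *\<^sub>R abp_d F grad C Q r (alpha k) (beta k) (gamma k) (istar k) (x k)"
  shows "\<exists>M. (\<forall>k. norm (abp_d F grad C Q r (alpha k) (beta k) (gamma k) (istar k) (x k)) \<le> M) \<and>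
             (\<forall>k. mu \<le> max mu (norm (abp_d F grad C Q r (alpha k) (beta k) (gamma k) (istar k) (x k))) \<and>
                  max mu (norm (abp_d F grad C Q r (alpha k) (beta k) (gamma k) (istar k) (x k))) \<le> max mu M)"
proof -
  define d where "d k = abp_d F grad C Q r (alpha k) (beta k) (gamma k) (istar k) (x k)" for k
  obtain s where "s \<in> Omega F C Q r" using A4 by blast
  note s = Omega_memD[OF this A2_C(2,1) A2_Q(1)]
  define R where "R = sqrt (norm (x 0 - s)^2 + (\<Sum>k. (lam k)^2))"
  have r_le_1: "r $ i \<le> 1" for i
    using member_le_sum[of i UNIV "\<lambda>i. r $ i"] r_pos r_sum by (simp add: less_imp_le)
  have params: "0 \<le> alpha k" "alpha k \<le> ahi" "0 \<le> beta k" "beta k \<le> bhi" "0 \<le> gamma k" "gamma k \<le> ghi" for k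
    using A6 by (meson order.trans less_imp_le)+
  have grad_ineq: "grad j y \<bullet> (s - y) \<le> F s $ j - F y $ j" for y j
    using A3 A1_deriv by (intro convex_on_gradient_inequality[where f = "\<lambda>y. F y $ j"]) auto
  have "0 \<le> d k \<bullet> (x k - s)" for k
    unfolding d_def using r_pos A2_C(3,2) A2_Q(3,1) s A7 params istar grad_ineq
    by (intro abp_d_inner_nonneg) (auto simp: less_imp_le)
  then have x_bounded: "x k \<in> cball s R" for k
    unfolding R_def using mu_pos A5 iter
    by (intro normalized_steps_in_cball[where d = d]) (auto simp: d_def less_imp_le)
  have "continuous_on UNIV (\<lambda>y. F y $ i)" for i
    using A1_deriv by (meson continuous_at_imp_continuous_on has_derivative_continuous)
  then have F_cont: "continuous_on UNIV F"
    using continuous_on_vec_lambda[of UNIV "\<lambda>i y. F y $ i"] by simp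
  have "bounded (range d)"
  proof (rule bounded_subset[OF abp_d_bounded_on_compact[OF compact_cball F_cont A1_cont[rule_format]
        A2_C(3,2,1) A2_Q(3,1)]])
    show "range d \<subseteq> {abp_d F grad C Q r a b g i y | a b g i y. y \<in> cball s R \<and>
      r $ i \<in> {0..1} \<and> a \<in> {0..ahi} \<and> b \<in> {0..bhi} \<and> g \<in> {0..ghi}}"
      unfolding d_def using x_bounded r_pos r_le_1 params by (fastforce simp: less_imp_le)
  qed
  then obtain M where "norm (d k) \<le> M" for k
    unfolding bounded_iff by blast
  then show ?thesis
    unfolding d_def by (intro exI[of _ M] conjI allI max.cobounded1 max.mono order_refl)
qed

end
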